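(* Let $\tau$ be an untwisted skew product with base shift a transitive subshift of finite type and group factor $\mathbb Z^d$. (b) If $0\in\mathrm{rot}(\tau)$, then $\mathrm{rot}(\tau)$ is $d$-dimensional if and only if $\langle D(\tau)\rangle$ is a rank-$d$ subgroup of $\mathbb Z^d$. (c) If $\tau$ has the ftp and $0\in\mathrm{rot}(\tau)$, then $\mathrm{rot}(\tau)$ is $d$-dimensional.
   Context: Subshift of finite type $(\Sigma,\sigma)$: finite state set $S$, $\{0,1\}$-matrix $C$, $\Sigma=\{s\in S^{\mathbb Z}:C_{s_is_{i+1}}=1\ \forall i\}$, $\sigma$ the left shift; transitive means for any states $a,b$ there is an allowed finite word from $a$ to $b$. Untwisted skew product: $\tau(s,n)=(\sigma s,n+h(s))$ on $\Sigma\times\mathbb Z^d$, $h$ depending only on $(s_0,s_1)$. $h(s,n)=\sum_{i=0}^{n-1}h(\sigma^is)$; $\mathrm{rot}(s)=\lim h(s,n)/n$ when it exists; $\mathrm{rot}(\tau)\subset\mathbb R^d$ the set of all rotation vectors (it is a convex polytope, the convex hull of rotation vectors of finitely many periodic points). Dimension means dimension of the convex set. $D(\tau)=\{h(p,n):n>0,\sigma^np=p\}$; $\langle X\rangle$ the generated subgroup. ftp: $\tau_\Gamma$ (induced map on $\Sigma\times\mathbb Z^d/\Gamma$) is transitive for every finite-index subgroup $\Gamma$. *)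

theory Defs
  imports "HOL-Analysis.Analysis"
begin

text \<open>States: the finite type 'a. Transition matrix: C :: 'a => 'a => bool.
  Group factor Z^d is int^'n with d = CARD('n).\<close>

definition sft :: "('a \<Rightarrow> 'a \<Rightarrow> bool) \<Rightarrow> (int \<Rightarrow> 'a) set" where
  "sft C = {s. \<forall>i. C (s i) (s (i + 1))}"

definition shift :: "(int \<Rightarrow> 'a) \<Rightarrow> (int \<Rightarrow> 'a)" where
  "shift s = (\<lambda>i. s (i + 1))"

definition allowed_path :: "('a \<Rightarrow> 'a \<Rightarrow> bool) \<Rightarrow> 'a \<Rightarrow> 'a \<Rightarrow> bool" where
  "allowed_path C a b = (\<exists>n::nat. \<exists>w::nat \<Rightarrow> 'a. n > 0 \<and> w 0 = a \<and> w n = b \<and>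
      (\<forall>i<n. C (w i) (w (Suc i))))"

definition transitive_sft :: "('a::finite \<Rightarrow> 'a \<Rightarrow> bool) \<Rightarrow> bool" where
  "transitive_sft C = (\<forall>a b. allowed_path C a b)"

text \<open>Cocycle h(s,n) = sum_{i<n} h(sigma^i s), h depending on (s_0,s_1).\<close>
definition hsum :: "('a \<Rightarrow> 'a \<Rightarrow> int^'n) \<Rightarrow> (int \<Rightarrow> 'a) \<Rightarrow> nat \<Rightarrow> int^'n" where
  "hsum h s n = (\<Sum>i<n. h (s (int i)) (s (int i + 1)))"

definition vec_real :: "int^'n \<Rightarrow> real^'n" where
  "vec_real x = (\<chi> j. real_of_int (x $ j))"

definition rot_set :: "('a \<Rightarrow> 'a \<Rightarrow> bool) \<Rightarrow> ('a \<Rightarrow> 'a \<Rightarrow> int^'n) \<Rightarrow> (real^'n) set" where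
  "rot_set C h = {v. \<exists>s\<in>sft C.
      ((\<lambda>n. (1 / real n) *\<^sub>R vec_real (hsum h s n)) \<longlongrightarrow> v) sequentially}"

definition Dset :: "('a \<Rightarrow> 'a \<Rightarrow> bool) \<Rightarrow> ('a \<Rightarrow> 'a \<Rightarrow> int^'n) \<Rightarrow> (int^'n) set" where
  "Dset C h = {hsum h p n | p n. p \<in> sft C \<and> n > 0 \<and> (shift ^^ n) p = p}"

definition is_zsubgroup :: "(int^'n) set \<Rightarrow> bool" where
  "is_zsubgroup G = (0 \<in> G \<and> (\<forall>x\<in>G. \<forall>y\<in>G. x - y \<in> G))"

definition gen_subgroup :: "(int^'n) set \<Rightarrow> (int^'n) set" where
  "gen_subgroup X = \<Inter>{G. is_zsubgroup G \<and> X \<subseteq> G}"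

definition finite_index :: "(int^'n) set \<Rightarrow> bool" where
  "finite_index G = (\<exists>F. finite F \<and> (\<forall>x. \<exists>f\<in>F. x - f \<in> G))"

definition int_lin_indep :: "(int^'n) set \<Rightarrow> bool" where
  "int_lin_indep V = (finite V \<and>
     (\<forall>c :: int^'n \<Rightarrow> int. (\<Sum>v\<in>V. c v *s v) = 0 \<longrightarrow> (\<forall>v\<in>V. c v = 0)))"

definition zrank :: "(int^'n) set \<Rightarrow> nat" where
  "zrank G = (GREATEST k. \<exists>V. V \<subseteq> G \<and> int_lin_indep V \<and> card V = k)"

text \<open>Product topology on the shift space: relatively open subsets of Sigma.\<close>
definition sft_open :: "('a \<Rightarrow> 'a \<Rightarrow> bool) \<Rightarrow> (int \<Rightarrow> 'a) set \<Rightarrow> bool" where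
  "sft_open C U = (U \<subseteq> sft C \<and>
     (\<forall>s\<in>U. \<exists>k::nat. {t \<in> sft C. \<forall>i. \<bar>i\<bar> \<le> int k \<longrightarrow> t i = s i} \<subseteq> U))"

text \<open>Topological transitivity of tau_Gamma on Sigma x (Z^d/Gamma): for nonempty open
  U x {a+Gamma}, V x {b+Gamma} (these form a basis) some positive iterate meets.\<close>
definition induced_transitive ::
  "('a \<Rightarrow> 'a \<Rightarrow> bool) \<Rightarrow> ('a \<Rightarrow> 'a \<Rightarrow> int^'n) \<Rightarrow> (int^'n) set \<Rightarrow> bool" where
  "induced_transitive C h \<Gamma> = (\<forall>U V a b. sft_open C U \<and> U \<noteq> {} \<and> sft_open C V \<and> V \<noteq> {} \<longrightarrow>
      (\<exists>n>0. \<exists>s\<in>U. (shift ^^ n) s \<in> V \<and> a + hsum h s n - b \<in> \<Gamma>))"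

definition ftp :: "('a \<Rightarrow> 'a \<Rightarrow> bool) \<Rightarrow> ('a \<Rightarrow> 'a \<Rightarrow> int^'n) \<Rightarrow> bool" where
  "ftp C h = (\<forall>\<Gamma>. is_zsubgroup \<Gamma> \<and> finite_index \<Gamma> \<longrightarrow> induced_transitive C h \<Gamma>)"

end

theory Submission
  imports Defs
begin

text \<open>
  Let D be the set of displacements h(p,n) of periodic orbits.  Two facts tie
  the rotation set to D:
  (1) the rotation vector h(p,n)/n of a periodic point p of period n is in rot(tau), so D
      lies in the linear span of rot(tau);
  (2) by cutting loops out of orbit segments, every displacement h(s,n) lies within a
      uniform distance of the subgroup generated by D, so every rotation vector, being a
      limit of h(s,n)/n, lies in the (closed) real span of D.
  Hence rot(tau) and D span the same subspace.  When 0 is a rotation vector the affine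
  dimension of rot(tau) is the dimension of its span, so rot(tau) is d-dimensional iff D
  spans R^d, which by linear algebra over Q is equivalent to the generated subgroup having
  rank d: this is part (b).  For part (c), if D did not span R^d, a nonzero integer
  functional f would vanish on D and, by (2), be bounded on all displacements; transitivity
  of tau modulo a subgroup N Z^d with N large contradicts this.
\<close>

definition allowed_word :: "('a \<Rightarrow> 'a \<Rightarrow> bool) \<Rightarrow> (nat \<Rightarrow> 'a) \<Rightarrow> nat \<Rightarrow> bool" where
  "allowed_word C w n = (\<forall>i<n. C (w i) (w (Suc i)))"

definition word_weight :: "('a \<Rightarrow> 'a \<Rightarrow> int^'n) \<Rightarrow> (nat \<Rightarrow> 'a) \<Rightarrow> nat \<Rightarrow> int^'n" where
  "word_weight h w n = (\<Sum>i<n. h (w i) (w (Suc i)))"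

lemma hsum_eq_word_weight: "hsum h s n = word_weight h (\<lambda>i. s (int i)) n"
  by (simp add: hsum_def word_weight_def add.commute)

lemma sft_allowed_word:
  assumes "s \<in> sft C"
  shows "allowed_word C (\<lambda>i. s (int i)) n"
proof -
  have step: "C (s j) (s (j + 1))" for j using assms unfolding sft_def by blast
  show ?thesis unfolding allowed_word_def
  proof (intro allI impI)
    fix i show "C (s (int i)) (s (int (Suc i)))" using step[of "int i"] by (simp add: add.commute)
  qed
qed

lemma shift_power: "(shift ^^ k) s = (\<lambda>i. s (i + int k))"
  by (induction k) (auto simp: shift_def ac_simps)

lemma sum_lessThan_add:
  fixes f :: "nat \<Rightarrow> 'b::comm_monoid_add"
  shows "(\<Sum>i<a + b. f i) = (\<Sum>i<a. f i) + (\<Sum>i<b. f (a + i))"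
  by (induction b) (simp_all add: add.assoc)

lemma word_weight_add:
  "word_weight h w (a + b) = word_weight h w a + word_weight h (\<lambda>k. w (a + k)) b"
  unfolding word_weight_def by (subst sum_lessThan_add) simp

lemma hsum_add: "hsum h s (m + k) = hsum h s m + hsum h ((shift ^^ m) s) k"
  unfolding hsum_def shift_power by (subst sum_lessThan_add) (simp add: ac_simps)


lemma gen_subgroup_is_zsubgroup: "is_zsubgroup (gen_subgroup X)"
  unfolding is_zsubgroup_def gen_subgroup_def by auto

lemma gen_subgroup_least: "is_zsubgroup G \<Longrightarrow> X \<subseteq> G \<Longrightarrow> gen_subgroup X \<subseteq> G"
  unfolding gen_subgroup_def by auto

lemma gen_subgroup_superset: "X \<subseteq> gen_subgroup X"
  unfolding gen_subgroup_def by auto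

lemma zsubgroup_add: "is_zsubgroup G \<Longrightarrow> x \<in> G \<Longrightarrow> y \<in> G \<Longrightarrow> x + y \<in> G"
  unfolding is_zsubgroup_def by (metis diff_0 diff_minus_eq_add)


section \<open>Cycles and the displacement set D\<close>

text \<open>A closed allowed word of positive length k is one period of a periodic point,
  so its weight belongs to D.\<close>

lemma closed_word_weight_in_Dset:
  assumes word: "allowed_word C u k" and k: "k > 0" and closed: "u k = u 0"
  shows "word_weight h u k \<in> Dset C h"
proof -
  define p where "p = (\<lambda>t::int. u (nat (t mod int k)))"
  have p_step: "p (t + 1) = u (Suc (nat (t mod int k)))" for t
  proof -
    have r: "0 \<le> t mod int k" "t mod int k < int k" using k by auto
    have e: "(t + 1) mod int k = (t mod int k + 1) mod int k" by (simp add: mod_add_left_eq)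
    show ?thesis
    proof (cases "t mod int k + 1 < int k")
      case True
      then have "(t + 1) mod int k = t mod int k + 1" using e r by simp
      then show ?thesis unfolding p_def using r by (simp add: nat_add_distrib)
    next
      case False
      then have wrap: "t mod int k + 1 = int k" using r by simp
      then have "(t + 1) mod int k = 0" using e by auto
      moreover have "Suc (nat (t mod int k)) = k"
        using wrap r by (metis Suc_nat_eq_nat_zadd1 nat_int add.commute)
      ultimately show ?thesis unfolding p_def using closed by simp
    qed
  qed
  have "p \<in> sft C"
    unfolding sft_def
  proof (safe)
    fix t
    have "nat (t mod int k) < k" using k by (simp add: nat_less_iff)
    then show "C (p t) (p (t + 1))" using word p_step[of t] unfolding allowed_word_def p_def by simp
  qed
  moreover have "(shift ^^ k) p = p"
    unfolding shift_power p_def by simp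
  moreover have "hsum h p k = word_weight h u k"
    unfolding hsum_def word_weight_def
  proof (rule sum.cong[OF refl])
    fix i assume i: "i \<in> {..<k}"
    then have "p (int i) = u i" "p (int i + 1) = u (Suc i)"
      using p_step[of "int i"] unfolding p_def by simp_all
    then show "h (p (int i)) (p (int i + 1)) = h (u i) (u (Suc i))" by simp
  qed
  ultimately show ?thesis unfolding Dset_def using k by force
qed

lemma word_weight_remove_loop:
  assumes word: "allowed_word C w (i + \<delta> + r)" and loop: "w i = w (i + \<delta>)"
  defines "w' \<equiv> \<lambda>k. if k \<le> i then w k else w (k + \<delta>)"
  shows "allowed_word C w' (i + r)"
    and "word_weight h w (i + \<delta> + r) = word_weight h w' (i + r) + word_weight h (\<lambda>k. w (i + k)) \<delta>"
proof -
  show "allowed_word C w' (i + r)"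
    unfolding allowed_word_def
  proof (intro allI impI)
    fix k assume k: "k < i + r"
    show "C (w' k) (w' (Suc k))"
    proof (cases "k < i")
      case True
      then show ?thesis using word unfolding allowed_word_def w'_def by auto
    next
      case False
      then have "w' k = w (k + \<delta>)" "w' (Suc k) = w (Suc (k + \<delta>))"
        unfolding w'_def using loop by auto
      moreover have "k + \<delta> < i + \<delta> + r" using k by simp
      ultimately show ?thesis using word unfolding allowed_word_def by auto
    qed
  qed
  have head: "word_weight h w' i = word_weight h w i"
    unfolding word_weight_def by (rule sum.cong) (auto simp: w'_def)
  have tail: "word_weight h (\<lambda>k. w' (i + k)) r = word_weight h (\<lambda>k. w (i + \<delta> + k)) r"
    unfolding word_weight_def
  proof (rule sum.cong[OF refl])
    fix k
    have "w' (i + k) = w (i + \<delta> + k)"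
      using loop unfolding w'_def by (cases "k = 0") (auto simp: ac_simps)
    moreover have "w' (i + Suc k) = w (i + \<delta> + Suc k)"
      unfolding w'_def by (simp add: ac_simps)
    ultimately show "h (w' (i + k)) (w' (i + Suc k)) = h (w (i + \<delta> + k)) (w (i + \<delta> + Suc k))"
      by simp
  qed
  show "word_weight h w (i + \<delta> + r) = word_weight h w' (i + r) + word_weight h (\<lambda>k. w (i + k)) \<delta>"
    unfolding word_weight_add head tail by (simp add: ac_simps)
qed

lemma long_word_repeats_state:
  fixes w :: "nat \<Rightarrow> 'a::finite"
  assumes "CARD('a) \<le> n"
  shows "\<exists>i j. i < j \<and> j \<le> n \<and> w i = w j"
proof -
  have "\<not> inj_on w {..n}"
  proof
    assume "inj_on w {..n}"
    then have "card (w ` {..n}) = Suc n" by (simp add: card_image)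
    moreover have "card (w ` {..n}) \<le> CARD('a)" by (rule card_mono) auto
    ultimately show False using assms by simp
  qed
  then show ?thesis unfolding inj_on_def by (metis atMost_iff linorder_neqE_nat)
qed

text \<open>Cycle decomposition: by repeatedly removing loops, the weight of any allowed word
  is an element of the group generated by D plus the weight of a word shorter than the
  number of states.\<close>

lemma word_weight_decomposition:
  fixes C :: "'a::finite \<Rightarrow> 'a \<Rightarrow> bool"
  assumes "allowed_word C w n"
  shows "\<exists>l\<in>gen_subgroup (Dset C h). \<exists>m w'. m < CARD('a) \<and> allowed_word C w' m \<and>
           word_weight h w n = l + word_weight h w' m"
  using assms
proof (induction n arbitrary: w rule: less_induct)
  case (less n)
  show ?case
  proof (cases "n < CARD('a)")
    case True
    have "0 \<in> gen_subgroup (Dset C h)"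
      using gen_subgroup_is_zsubgroup unfolding is_zsubgroup_def by blast
    then show ?thesis using less.prems True by (intro bexI[of _ 0]) auto
  next
    case False
    then obtain i j where ij: "i < j" "j \<le> n" "w i = w j"
      using long_word_repeats_state[of n w] by auto
    define \<delta> r where "\<delta> = j - i" and "r = n - j"
    have n: "n = i + \<delta> + r" and loop: "w i = w (i + \<delta>)" using ij unfolding \<delta>_def r_def by auto
    define w' where "w' = (\<lambda>k. if k \<le> i then w k else w (k + \<delta>))"
    have word': "allowed_word C w' (i + r)"
      and split: "word_weight h w n = word_weight h w' (i + r) + word_weight h (\<lambda>k. w (i + k)) \<delta>"
      using word_weight_remove_loop[OF less.prems[unfolded n] loop] unfolding w'_def n by blast+
    have "word_weight h (\<lambda>k. w (i + k)) \<delta> \<in> Dset C h"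
    proof (rule closed_word_weight_in_Dset)
      show "allowed_word C (\<lambda>k. w (i + k)) \<delta>" using less.prems unfolding allowed_word_def n by auto
      show "\<delta> > 0" using ij unfolding \<delta>_def by simp
      show "w (i + \<delta>) = w (i + 0)" using loop by simp
    qed
    moreover have "i + r < n" using n ij unfolding \<delta>_def by simp
    from less.IH[OF this word'] obtain l m w'' where
      l: "l \<in> gen_subgroup (Dset C h)" "m < CARD('a)" "allowed_word C w'' m"
        "word_weight h w' (i + r) = l + word_weight h w'' m"
      by blast
    ultimately have "l + word_weight h (\<lambda>k. w (i + k)) \<delta> \<in> gen_subgroup (Dset C h)"
      using gen_subgroup_superset by (blast intro: zsubgroup_add[OF gen_subgroup_is_zsubgroup])
    moreover have "word_weight h w n = (l + word_weight h (\<lambda>k. w (i + k)) \<delta>) + word_weight h w'' m"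
      using split l(4) by (simp add: algebra_simps)
    ultimately show ?thesis using l by blast
  qed
qed


lemma vec_real_add: "vec_real (x + y) = vec_real x + vec_real y"
  by (simp add: vec_real_def vec_eq_iff)

lemma vec_real_diff: "vec_real (x - y) = vec_real x - vec_real y"
  by (simp add: vec_real_def vec_eq_iff)

lemma vec_real_zero [simp]: "vec_real 0 = 0"
  by (simp add: vec_real_def vec_eq_iff)

lemma vec_real_sum: "vec_real (sum f S) = (\<Sum>x\<in>S. vec_real (f x))"
  by (simp add: vec_real_def vec_eq_iff)

lemma vec_real_scale: "vec_real (c *s x) = real_of_int c *\<^sub>R vec_real x"
  by (simp add: vec_real_def vec_eq_iff)

lemma inj_vec_real: "inj vec_real"
  by (auto simp: inj_def vec_real_def vec_eq_iff)

lemma gen_subgroup_in_span: "l \<in> gen_subgroup X \<Longrightarrow> vec_real l \<in> span (vec_real ` X)"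
proof -
  have "gen_subgroup X \<subseteq> {x. vec_real x \<in> span (vec_real ` X)}"
  proof (rule gen_subgroup_least)
    show "is_zsubgroup {x. vec_real x \<in> span (vec_real ` X)}"
      unfolding is_zsubgroup_def by (auto simp: vec_real_diff span_diff span_zero)
    show "X \<subseteq> {x. vec_real x \<in> span (vec_real ` X)}" by (auto intro: span_base)
  qed
  then show "l \<in> gen_subgroup X \<Longrightarrow> vec_real l \<in> span (vec_real ` X)" by blast
qed


section \<open>Orbit displacements stay close to the cycle group\<close>

definition step_bound :: "('a::finite \<Rightarrow> 'a \<Rightarrow> int^'n) \<Rightarrow> real" where
  "step_bound h = (\<Sum>p\<in>UNIV. norm (vec_real (h (fst p) (snd p))))"

lemma step_bound_nonneg: "0 \<le> step_bound h"
  unfolding step_bound_def by (intro sum_nonneg) auto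

lemma word_weight_norm_le: "norm (vec_real (word_weight h w m)) \<le> real m * step_bound h"
proof -
  have step: "norm (vec_real (h a b)) \<le> step_bound h" for a b
    unfolding step_bound_def
    using member_le_sum[of "(a, b)" UNIV "\<lambda>p. norm (vec_real (h (fst p) (snd p)))"] by simp
  have "norm (vec_real (word_weight h w m)) \<le> (\<Sum>i<m. norm (vec_real (h (w i) (w (Suc i)))))"
    unfolding word_weight_def vec_real_sum by (rule norm_sum)
  also have "\<dots> \<le> (\<Sum>i<m. step_bound h)" by (rule sum_mono) (rule step)
  finally show ?thesis by simp
qed

lemma hsum_near_gen_subgroup:
  fixes C :: "'a::finite \<Rightarrow> 'a \<Rightarrow> bool"
  assumes "s \<in> sft C"
  shows "\<exists>l\<in>gen_subgroup (Dset C h).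
           norm (vec_real (hsum h s n) - vec_real l) \<le> real CARD('a) * step_bound h"
proof -
  obtain l m w where l: "l \<in> gen_subgroup (Dset C h)" "m < CARD('a)"
      "word_weight h (\<lambda>i. s (int i)) n = l + word_weight h w m"
    using word_weight_decomposition[OF sft_allowed_word[OF assms, of n], of h] by blast
  have "norm (vec_real (hsum h s n) - vec_real l) = norm (vec_real (word_weight h w m))"
    unfolding hsum_eq_word_weight l(3) vec_real_add by simp
  also have "\<dots> \<le> real m * step_bound h" by (rule word_weight_norm_le)
  also have "\<dots> \<le> real CARD('a) * step_bound h"
    using l(2) step_bound_nonneg by (intro mult_right_mono) auto
  finally show ?thesis using l(1) by blast
qed


section \<open>The linear span of the rotation set\<close>

lemma additive_average_limit:
  fixes R :: "nat \<Rightarrow> 'v::real_normed_vector"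
  assumes n: "n > 0" and additive: "\<And>k. R (n + k) = R n + R k"
  shows "((\<lambda>m. (1 / real m) *\<^sub>R R m) \<longlongrightarrow> (1 / real n) *\<^sub>R R n) sequentially"
proof -
  have R_multiple: "R (q * n + r) = real q *\<^sub>R R n + R r" for q r
  proof (induction q)
    case (Suc q)
    have "R (Suc q * n + r) = R n + R (q * n + r)" using additive by (simp add: add.assoc)
    then show ?case using Suc by (simp add: algebra_simps)
  qed simp
  define v where "v = (1 / real n) *\<^sub>R R n"
  define B where "B = norm (R n) + (\<Sum>r<n. norm (R r))"
  have bound: "norm ((1 / real m) *\<^sub>R R m - v) \<le> B * (1 / real m)" if m: "m > 0" for m
  proof -
    define q r where "q = m div n" and "r = m mod n"
    have mq: "m = q * n + r" and rn: "r < n" unfolding q_def r_def using n by simp_all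
    have "real m = real q * real n + real r" using mq by (metis of_nat_add of_nat_mult)
    then have coef: "real q / real m - 1 / real n = - (real r / (real m * real n))"
      using m n by (simp add: field_simps)
    have "(1 / real m) *\<^sub>R R m - v = (real q / real m - 1 / real n) *\<^sub>R R n + (1 / real m) *\<^sub>R R r"
      unfolding v_def by (subst mq, subst R_multiple) (simp add: algebra_simps)
    then have eq: "(1 / real m) *\<^sub>R R m - v
        = (- (real r / (real m * real n))) *\<^sub>R R n + (1 / real m) *\<^sub>R R r"
      unfolding coef .
    have c1: "real r / (real m * real n) \<le> 1 / real m"
      using rn m n by (simp add: field_simps)
    have c2: "norm (R r) \<le> (\<Sum>r<n. norm (R r))"
      by (rule member_le_sum) (use rn in auto)
    have "norm ((1 / real m) *\<^sub>R R m - v)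
        \<le> (real r / (real m * real n)) * norm (R n) + (1 / real m) * norm (R r)"
      unfolding eq by (rule order_trans[OF norm_triangle_ineq]) simp
    also have "\<dots> \<le> (1 / real m) * norm (R n) + (1 / real m) * (\<Sum>r<n. norm (R r))"
      by (intro add_mono mult_right_mono mult_left_mono c1 c2) auto
    also have "\<dots> = B * (1 / real m)" unfolding B_def by (simp add: algebra_simps)
    finally show ?thesis .
  qed
  have "((\<lambda>m. B * (1 / real m)) \<longlongrightarrow> 0) sequentially"
    using tendsto_mult[OF tendsto_const lim_inverse_n', of B] by simp
  moreover have "\<forall>\<^sub>F m in sequentially. norm ((1 / real m) *\<^sub>R R m - v) \<le> B * (1 / real m)"
    using eventually_gt_at_top[of 0] by eventually_elim (rule bound)
  ultimately have "((\<lambda>m. (1 / real m) *\<^sub>R R m - v) \<longlongrightarrow> 0) sequentially"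
    by (rule Lim_null_comparison[rotated])
  then show ?thesis unfolding v_def by (rule LIM_zero_cancel)
qed

lemma periodic_rotation_vector:
  assumes "p \<in> sft C" "n > 0" "(shift ^^ n) p = p"
  shows "(1 / real n) *\<^sub>R vec_real (hsum h p n) \<in> rot_set C h"
proof -
  have "((\<lambda>m. (1 / real m) *\<^sub>R vec_real (hsum h p m)) \<longlongrightarrow> (1 / real n) *\<^sub>R vec_real (hsum h p n))
          sequentially"
    by (rule additive_average_limit[OF assms(2)]) (simp add: hsum_add assms(3) vec_real_add)
  then show ?thesis unfolding rot_set_def using assms(1) by auto
qed

lemma average_limit_in_span:
  fixes x :: "nat \<Rightarrow> 'v::euclidean_space"
  assumes near: "\<And>m. \<exists>y\<in>span X. norm (x m - y) \<le> K"
    and lim: "((\<lambda>m. (1 / real m) *\<^sub>R x m) \<longlongrightarrow> v) sequentially"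
  shows "v \<in> span X"
proof -
  obtain y where y: "\<And>m. y m \<in> span X" "\<And>m. norm (x m - y m) \<le> K"
    using near by metis
  have "((\<lambda>m. K * (1 / real m)) \<longlongrightarrow> 0) sequentially"
    using tendsto_mult[OF tendsto_const lim_inverse_n', of K] by simp
  then have "((\<lambda>m. (1 / real m) *\<^sub>R x m - (1 / real m) *\<^sub>R y m) \<longlongrightarrow> 0) sequentially"
  proof (rule Lim_null_comparison[rotated], intro always_eventually allI)
    fix m
    have "norm ((1 / real m) *\<^sub>R x m - (1 / real m) *\<^sub>R y m) = (1 / real m) * norm (x m - y m)"
      by (simp flip: scaleR_diff_right)
    also have "\<dots> \<le> (1 / real m) * K" by (intro mult_left_mono y(2)) auto
    finally show "norm ((1 / real m) *\<^sub>R x m - (1 / real m) *\<^sub>R y m) \<le> K * (1 / real m)"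
      by (simp add: mult.commute)
  qed
  from tendsto_diff[OF lim this]
  have "((\<lambda>m. (1 / real m) *\<^sub>R y m) \<longlongrightarrow> v) sequentially" by simp
  moreover have "\<forall>\<^sub>F m in sequentially. (1 / real m) *\<^sub>R y m \<in> span X"
    using y(1) by (simp add: span_scale)
  ultimately show ?thesis
    using Lim_in_closed_set[OF closed_span] by (metis trivial_limit_sequentially)
qed

text \<open>Rotation vectors of periodic points are multiples of elements of D, and every
  rotation vector is a limit of averages staying near the group generated by D; hence the
  rotation set and D span the same linear subspace.\<close>

lemma span_rot_set:
  fixes C :: "'a::finite \<Rightarrow> 'a \<Rightarrow> bool"
  shows "span (rot_set C h) = span (vec_real ` Dset C h)"
proof -
  have "rot_set C h \<subseteq> span (vec_real ` Dset C h)"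
  proof
    fix v assume "v \<in> rot_set C h"
    then obtain s where s: "s \<in> sft C"
      and lim: "((\<lambda>n. (1 / real n) *\<^sub>R vec_real (hsum h s n)) \<longlongrightarrow> v) sequentially"
      unfolding rot_set_def by blast
    show "v \<in> span (vec_real ` Dset C h)"
    proof (rule average_limit_in_span[OF _ lim])
      fix m
      show "\<exists>y\<in>span (vec_real ` Dset C h).
              norm (vec_real (hsum h s m) - y) \<le> real CARD('a) * step_bound h"
        using hsum_near_gen_subgroup[OF s] gen_subgroup_in_span by blast
    qed
  qed
  moreover have "vec_real ` Dset C h \<subseteq> span (rot_set C h)"
  proof
    fix y assume "y \<in> vec_real ` Dset C h"
    then obtain p n where pn: "y = vec_real (hsum h p n)" "p \<in> sft C" "n > 0" "(shift ^^ n) p = p"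
      unfolding Dset_def by blast
    have "real n *\<^sub>R ((1 / real n) *\<^sub>R vec_real (hsum h p n)) \<in> span (rot_set C h)"
      using periodic_rotation_vector[OF pn(2-4)] by (intro span_scale span_base)
    then show "y \<in> span (rot_set C h)" using pn(1,3) by simp
  qed
  ultimately show ?thesis by (simp add: span_eq)
qed


section \<open>Integer, rational and real spans\<close>

text \<open>Rank questions about subgroups of Z^d are settled over the rationals, where
  integer independence becomes linear independence after clearing denominators, and the
  results are then transported to the reals.\<close>

definition rat_of_int_vec :: "int^'n \<Rightarrow> rat^'n" where
  "rat_of_int_vec x = (\<chi> j. of_int (x $ j))"

definition real_of_rat_vec :: "rat^'n \<Rightarrow> real^'n" where
  "real_of_rat_vec x = (\<chi> j. of_rat (x $ j))"

lemma real_of_rat_of_int_vec: "real_of_rat_vec (rat_of_int_vec x) = vec_real x"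
  by (simp add: real_of_rat_vec_def rat_of_int_vec_def vec_real_def vec_eq_iff)

lemma inj_rat_of_int_vec: "inj rat_of_int_vec"
  by (auto simp: inj_def rat_of_int_vec_def vec_eq_iff)

lemma real_span_full_if_rat_span_full:
  fixes X :: "(int^'n) set"
  assumes "vec.span (rat_of_int_vec ` X) = UNIV"
  shows "span (vec_real ` X) = UNIV"
proof -
  have "axis j (1::real) \<in> span (vec_real ` X)" for j
  proof -
    have "axis j (1::rat) \<in> vec.span (rat_of_int_vec ` X)" using assms by simp
    then obtain t r where t: "finite t" "t \<subseteq> rat_of_int_vec ` X" "axis j 1 = (\<Sum>a\<in>t. r a *s a)"
      unfolding vec.span_explicit by blast
    have "axis j (1::real) = real_of_rat_vec (axis j 1)"
      by (simp add: real_of_rat_vec_def vec_eq_iff axis_def)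
    also have "\<dots> = (\<Sum>a\<in>t. of_rat (r a) *\<^sub>R real_of_rat_vec a)"
      unfolding t(3) by (simp add: real_of_rat_vec_def vec_eq_iff of_rat_sum of_rat_mult)
    also have "\<dots> \<in> span (vec_real ` X)"
    proof (rule span_sum, rule span_scale, rule span_base)
      fix a assume "a \<in> t"
      then obtain x where "x \<in> X" "a = rat_of_int_vec x" using t(2) by blast
      then show "real_of_rat_vec a \<in> vec_real ` X" by (simp add: real_of_rat_of_int_vec)
    qed
    finally show ?thesis .
  qed
  then have "Basis \<subseteq> span (vec_real ` X)" by (auto simp: Basis_vec_def)
  then have "span Basis \<subseteq> span (vec_real ` X)" by (metis span_mono span_span)
  then show ?thesis by (simp add: top.extremum_uniqueI)
qed

lemma common_denominator:
  assumes "finite A"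
  shows "\<exists>N::int. N > 0 \<and> (\<forall>q\<in>A. of_int N * (q::rat) \<in> \<int>)"
  using assms
proof (induction A rule: finite_induct)
  case empty
  show ?case by (intro exI[of _ 1]) simp
next
  case (insert q A)
  then obtain N where N: "N > 0" "\<forall>q\<in>A. of_int N * q \<in> \<int>" by blast
  obtain a b where ab: "quotient_of q = (a, b)" by (cases "quotient_of q")
  have b: "b > 0" using quotient_of_denom_pos[OF ab] .
  have bq: "rat_of_int b * q = rat_of_int a" using b quotient_of_div[OF ab] by simp
  show ?case
  proof (intro exI[of _ "N * b"] conjI ballI)
    show "N * b > 0" using N b by simp
    fix q' assume "q' \<in> insert q A"
    then show "of_int (N * b) * q' \<in> \<int>"
    proof
      assume "q' = q"
      then have "of_int (N * b) * q' = of_int N * (rat_of_int b * q)"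
        by (simp only: of_int_mult mult.assoc)
      also have "\<dots> = of_int (N * a)" by (simp only: bq of_int_mult)
      finally show ?thesis by (simp only:) (rule Ints_of_int)
    next
      assume "q' \<in> A"
      then have "of_int N * q' \<in> \<int>" using N by blast
      then have "of_int b * (of_int N * q') \<in> \<int>" by (rule Ints_mult[OF Ints_of_int])
      then show ?thesis by (simp add: ac_simps)
    qed
  qed
qed

lemma int_lin_indep_imp_rat_independent:
  fixes V :: "(int^'n) set"
  assumes indep: "int_lin_indep V"
  shows "vec.independent (rat_of_int_vec ` V)"
  unfolding vec.independent_explicit
proof (intro conjI allI impI ballI)
  have fin: "finite V" using indep unfolding int_lin_indep_def by simp
  then show "finite (rat_of_int_vec ` V)" by simp
  fix u w assume sum0: "(\<Sum>v\<in>rat_of_int_vec ` V. u v *s v) = 0" and w: "w \<in> rat_of_int_vec ` V"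
  let ?q = "\<lambda>v. u (rat_of_int_vec v)"
  have sum0': "(\<Sum>v\<in>V. ?q v *s rat_of_int_vec v) = 0"
    using sum0 by (simp add: sum.reindex[OF inj_on_subset[OF inj_rat_of_int_vec subset_UNIV]])
  obtain N where N: "N > 0" "\<forall>q\<in>?q ` V. of_int N * q \<in> \<int>"
    using common_denominator[of "?q ` V"] fin by auto
  define c where "c v = \<lfloor>of_int N * ?q v\<rfloor>" for v
  have c: "of_int (c v) = of_int N * ?q v" if "v \<in> V" for v
    unfolding c_def using N(2) that by simp
  have "rat_of_int_vec (\<Sum>v\<in>V. c v *s v) = (\<Sum>v\<in>V. of_int (c v) *s rat_of_int_vec v)"
    by (simp add: rat_of_int_vec_def vec_eq_iff)
  also have "\<dots> = of_int N *s (\<Sum>v\<in>V. ?q v *s rat_of_int_vec v)"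
    by (simp add: c vec.scale_sum_right)
  also have "\<dots> = 0" using sum0' by simp
  finally have "rat_of_int_vec (\<Sum>v\<in>V. c v *s v) = rat_of_int_vec 0"
    by (simp add: rat_of_int_vec_def vec_eq_iff)
  then have "(\<Sum>v\<in>V. c v *s v) = 0" by (rule injD[OF inj_rat_of_int_vec])
  then have "\<forall>v\<in>V. c v = 0" using indep unfolding int_lin_indep_def by blast
  moreover obtain v where v: "v \<in> V" "w = rat_of_int_vec v" using w by blast
  ultimately have "of_int N * u w = 0" using c[OF v(1)] by simp
  then show "u w = 0" using N by simp
qed

lemma int_lin_indep_card_le:
  fixes V :: "(int^'n) set"
  assumes "int_lin_indep V"
  shows "card V \<le> CARD('n)"
proof -
  have "card (rat_of_int_vec ` V) \<le> vec.dim (UNIV :: (rat^'n) set)"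
    by (rule vec.independent_card_le_dim[OF subset_UNIV int_lin_indep_imp_rat_independent[OF assms]])
  then show ?thesis
    using vec_dim_card card_image[OF inj_on_subset[OF inj_rat_of_int_vec subset_UNIV]] by metis
qed

text \<open>Since independent sets have at most d elements, a subgroup has full rank d exactly
  when it contains d independent vectors.\<close>

lemma zrank_full_iff:
  fixes G :: "(int^'n) set"
  shows "zrank G = CARD('n) \<longleftrightarrow> (\<exists>V. V \<subseteq> G \<and> int_lin_indep V \<and> card V = CARD('n))"
proof -
  let ?P = "\<lambda>k. \<exists>V. V \<subseteq> G \<and> int_lin_indep V \<and> card V = k"
  have bound: "\<forall>k. ?P k \<longrightarrow> k \<le> CARD('n)" using int_lin_indep_card_le by blast
  have "?P 0" by (intro exI[of _ "{}"]) (simp add: int_lin_indep_def)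
  then have "?P (Greatest ?P)" using bound by (intro GreatestI_nat[of ?P 0 "CARD('n)"]) blast+
  moreover have "Greatest ?P = CARD('n)" if "?P CARD('n)"
    using that bound by (intro Greatest_equality) auto
  ultimately show ?thesis unfolding zrank_def by auto
qed

lemma int_lin_indep_if_real_independent:
  fixes V :: "(int^'n) set"
  assumes fin: "finite V" and indep: "independent (vec_real ` V)"
  shows "int_lin_indep V"
  unfolding int_lin_indep_def
proof (intro conjI allI impI ballI)
  show "finite V" by (rule fin)
  fix c v assume sum0: "(\<Sum>v\<in>V. c v *s v) = 0" and v: "v \<in> V"
  have inj: "inj_on vec_real V" using inj_vec_real by (rule inj_on_subset) simp
  have "(\<Sum>v\<in>V. real_of_int (c v) *\<^sub>R vec_real v) = 0"
    using arg_cong[OF sum0, of vec_real] by (simp add: vec_real_sum vec_real_scale)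
  then have "(\<Sum>b\<in>vec_real ` V. real_of_int (c (inv vec_real b)) *\<^sub>R b) = 0"
    by (simp add: sum.reindex[OF inj] inv_f_f[OF inj_vec_real])
  then have "real_of_int (c (inv vec_real (vec_real v))) = 0"
    using indep fin v by (auto simp: independent_explicit)
  then show "c v = 0" by (simp add: inv_f_f[OF inj_vec_real])
qed

lemma full_rank_real_span:
  fixes V :: "(int^'n) set"
  assumes indep: "int_lin_indep V" and card: "card V = CARD('n)"
  shows "span (vec_real ` V) = UNIV"
proof -
  have ind: "vec.independent (rat_of_int_vec ` V)"
    by (rule int_lin_indep_imp_rat_independent[OF indep])
  have "card (rat_of_int_vec ` V) = CARD('n)"
    using card card_image[OF inj_on_subset[OF inj_rat_of_int_vec subset_UNIV], of V] by simp
  moreover have "vec.dim (UNIV :: (rat^'n) set) = CARD('n)" by (rule vec_dim_card)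
  ultimately have "UNIV \<subseteq> vec.span (rat_of_int_vec ` V)"
    using vec.card_eq_dim[of "rat_of_int_vec ` V" UNIV, OF subset_UNIV] ind
      vec.finiteI_independent[OF ind] by simp
  then show ?thesis by (intro real_span_full_if_rat_span_full) blast
qed

text \<open>A real basis chosen inside D is
  integer-independent; conversely d independent elements of the subgroup span R^d and lie
  in the span of D.\<close>

lemma real_span_full_iff_zrank:
  fixes D :: "(int^'n) set"
  shows "span (vec_real ` D) = UNIV \<longleftrightarrow> zrank (gen_subgroup D) = CARD('n)"
proof
  assume full: "span (vec_real ` D) = UNIV"
  obtain B where B: "B \<subseteq> vec_real ` D" "independent B" "vec_real ` D \<subseteq> span B"
      "card B = dim (vec_real ` D)"
    by (rule basis_exists)
  define V where "V = D \<inter> vec_real -` B"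
  have VB: "vec_real ` V = B" using B(1) unfolding V_def by auto
  have inj: "inj_on vec_real V" using inj_vec_real by (rule inj_on_subset) simp
  have "card V = CARD('n)"
    using card_image[OF inj] VB B(4) full dim_eq_full[of "vec_real ` D"] by simp
  moreover have "finite V"
    using finite_imageD[of vec_real V] VB inj finiteI_independent[OF B(2)] by simp
  then have "int_lin_indep V"
    using B(2) VB by (intro int_lin_indep_if_real_independent) auto
  moreover have "V \<subseteq> gen_subgroup D" using gen_subgroup_superset unfolding V_def by blast
  ultimately show "zrank (gen_subgroup D) = CARD('n)" using zrank_full_iff by blast
next
  assume "zrank (gen_subgroup D) = CARD('n)"
  then obtain V where V: "V \<subseteq> gen_subgroup D" "int_lin_indep V" "card V = CARD('n)"
    using zrank_full_iff by blast
  have "span (vec_real ` V) = UNIV" by (rule full_rank_real_span[OF V(2,3)])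
  moreover have "vec_real ` V \<subseteq> span (vec_real ` D)" using V(1) gen_subgroup_in_span by blast
  ultimately show "span (vec_real ` D) = UNIV" by (metis span_mono span_span top.extremum_uniqueI)
qed


section \<open>Integer functionals annihilating D\<close>

definition zdot :: "int^'n \<Rightarrow> int^'n \<Rightarrow> int" where
  "zdot a x = (\<Sum>j\<in>UNIV. a $ j * x $ j)"

lemma zdot_zero [simp]: "zdot a 0 = 0"
  by (simp add: zdot_def)

lemma zdot_diff: "zdot a (x - y) = zdot a x - zdot a y"
  by (simp add: zdot_def algebra_simps sum_subtractf)

lemma zdot_scale: "zdot a (c *s x) = c * zdot a x"
  by (simp add: zdot_def sum_distrib_left ac_simps)

lemma zdot_axis: "zdot a (axis j 1) = a $ j"
  by (simp add: zdot_def axis_def if_distrib cong: if_cong)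

lemma zdot_eq_inner: "real_of_int (zdot a x) = inner (vec_real a) (vec_real x)"
  by (simp add: zdot_def inner_vec_def vec_real_def)

text \<open>A proper rational subspace is annihilated by a nonzero rational functional: extend a
  basis of the subspace by a missing coordinate vector e_k and take the k-th coordinate of
  a linear map killing the basis and fixing e_k.\<close>

lemma rat_annihilator:
  fixes S :: "(rat^'n) set"
  assumes "vec.span S \<noteq> UNIV"
  shows "\<exists>ar::rat^'n. ar \<noteq> 0 \<and> (\<forall>x\<in>S. (\<Sum>j\<in>UNIV. x $ j * ar $ j) = 0)"
proof -
  have "\<exists>k. axis k (1::rat) \<notin> vec.span S"
  proof (rule ccontr)
    assume "\<not> ?thesis"
    then have "cart_basis \<subseteq> vec.span S" by (auto simp: cart_basis_def)
    then have "vec.span cart_basis \<subseteq> vec.span S" by (rule vec.span_minimal) (rule vec.subspace_span)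
    then show False using assms span_cart_basis by auto
  qed
  then obtain k where k: "axis k (1::rat) \<notin> vec.span S" by blast
  obtain B where B: "B \<subseteq> vec.span S" "vec.independent B" "vec.span S \<subseteq> vec.span B"
    using vec.basis_exists[of "vec.span S"] by metis
  have "vec.span B \<subseteq> vec.span S" using B(1) vec.span_minimal vec.subspace_span by blast
  then have ek: "axis k 1 \<notin> vec.span B" using k by blast
  obtain g :: "rat^'n \<Rightarrow> rat^'n" where g: "Vector_Spaces.linear (*s) (*s) g"
      "\<forall>x\<in>insert (axis k 1) B. g x = (if x = axis k 1 then axis k 1 else 0)"
    using vec.linear_independent_extend[OF vec.independent_insertI[OF ek B(2)],
        of "\<lambda>x. if x = axis k 1 then axis k 1 else 0"] by blast
  have g_span: "vec.span B \<subseteq> {x. g x = 0}"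
  proof (rule vec.span_minimal)
    show "B \<subseteq> {x. g x = 0}" using g(2) ek vec.span_base by fastforce
    show "vec.subspace {x. g x = 0}" unfolding vec.subspace_def
      using vec.linear_0[OF g(1)] vec.linear_add[OF g(1)] vec.linear_scale[OF g(1)] by auto
  qed
  define ar where "ar = (\<chi> j. g (axis j 1) $ k)"
  have g_coord: "g x $ k = (\<Sum>j\<in>UNIV. x $ j * ar $ j)" for x
  proof -
    have "g x = g (\<Sum>j\<in>UNIV. x $ j *s axis j 1)" by (simp only: basis_expansion)
    also have "\<dots> = (\<Sum>j\<in>UNIV. x $ j *s g (axis j 1))"
      by (simp add: vec.linear_sum[OF g(1)] vec.linear_scale[OF g(1)])
    finally show ?thesis by (simp add: ar_def)
  qed
  have "ar $ k = 1" using g(2) by (simp add: ar_def axis_def)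
  then have "ar \<noteq> 0" by auto
  moreover have "(\<Sum>j\<in>UNIV. x $ j * ar $ j) = 0" if "x \<in> S" for x
    using g_span B(3) vec.span_base[OF that] g_coord[of x] by auto
  ultimately show ?thesis by blast
qed

text \<open>If D does not span R^d, some nonzero integer functional vanishes on D (clear the
  denominators of a rational one).\<close>

lemma int_annihilator:
  fixes D :: "(int^'n) set"
  assumes "span (vec_real ` D) \<noteq> UNIV"
  shows "\<exists>a. a \<noteq> 0 \<and> (\<forall>x\<in>D. zdot a x = 0)"
proof -
  have "vec.span (rat_of_int_vec ` D) \<noteq> UNIV"
    using assms real_span_full_if_rat_span_full by blast
  then obtain ar :: "rat^'n" where ar: "ar \<noteq> 0"
      "\<forall>x\<in>D. (\<Sum>j\<in>UNIV. rat_of_int_vec x $ j * ar $ j) = 0"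
    using rat_annihilator by blast
  obtain N where N: "N > 0" "\<forall>q\<in>range (\<lambda>j. ar $ j). of_int N * q \<in> \<int>"
    using common_denominator[of "range (\<lambda>j. ar $ j)"] by auto
  define a :: "int^'n" where "a = (\<chi> j. \<lfloor>of_int N * ar $ j\<rfloor>)"
  have a: "of_int (a $ j) = of_int N * ar $ j" for j
    unfolding a_def using N(2) by simp
  obtain j where "ar $ j \<noteq> 0" using ar(1) by (auto simp: vec_eq_iff)
  then have "a $ j \<noteq> 0" using a[of j] N(1) by auto
  then have "a \<noteq> 0" by auto
  moreover have "zdot a x = 0" if "x \<in> D" for x
  proof -
    have "(of_int (zdot a x) :: rat) = of_int N * (\<Sum>j\<in>UNIV. rat_of_int_vec x $ j * ar $ j)"
      by (simp add: zdot_def a rat_of_int_vec_def sum_distrib_left ac_simps)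
    then show ?thesis using ar(2) that by simp
  qed
  ultimately show ?thesis by blast
qed


section \<open>The finite-transitivity property forces full rank\<close>

lemma multiples_subgroup:
  fixes N :: int
  assumes "N > 0"
  shows "is_zsubgroup {x :: int^'n. \<forall>j. N dvd x $ j}"
    and "finite_index {x :: int^'n. \<forall>j. N dvd x $ j}"
proof -
  show "is_zsubgroup {x :: int^'n. \<forall>j. N dvd x $ j}"
    unfolding is_zsubgroup_def by auto
  let ?R = "(\<lambda>g. \<chi> j. g j) ` (PiE UNIV (\<lambda>_. {0..<N})) :: (int^'n) set"
  show "finite_index {x :: int^'n. \<forall>j. N dvd x $ j}"
    unfolding finite_index_def
  proof (intro exI conjI allI)
    show "finite ?R" by (intro finite_imageI finite_PiE) auto
    fix x :: "int^'n"
    have "(\<lambda>j. x $ j mod N) \<in> PiE UNIV (\<lambda>_. {0..<N})" using assms by (auto simp: PiE_iff)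
    moreover have "x - (\<chi> j. x $ j mod N) \<in> {x. \<forall>j. N dvd x $ j}" by simp
    ultimately show "\<exists>f\<in>?R. x - f \<in> {x. \<forall>j. N dvd x $ j}" by blast
  qed
qed

text \<open>An integer functional vanishing on D is uniformly bounded on all orbit
  displacements h(s,n), because these stay near the group generated by D.\<close>

lemma annihilator_bounded_on_orbits:
  fixes C :: "'a::finite \<Rightarrow> 'a \<Rightarrow> bool"
  assumes vanish: "\<forall>x\<in>Dset C h. zdot a x = 0"
  shows "\<exists>M. \<forall>s\<in>sft C. \<forall>n. \<bar>zdot a (hsum h s n)\<bar> \<le> M"
proof -
  define K where "K = real CARD('a) * step_bound h"
  have group: "gen_subgroup (Dset C h) \<subseteq> {x. zdot a x = 0}"
  proof (rule gen_subgroup_least)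
    show "is_zsubgroup {x. zdot a x = 0}"
      unfolding is_zsubgroup_def by (simp add: zdot_diff)
  qed (use vanish in auto)
  have "\<bar>zdot a (hsum h s n)\<bar> \<le> \<lceil>norm (vec_real a) * K\<rceil>" if s: "s \<in> sft C" for s n
  proof -
    obtain l where l: "l \<in> gen_subgroup (Dset C h)" "norm (vec_real (hsum h s n) - vec_real l) \<le> K"
      using hsum_near_gen_subgroup[OF s] unfolding K_def by blast
    have "zdot a (hsum h s n) = zdot a (hsum h s n - l)" using group l(1) by (auto simp: zdot_diff)
    then have "real_of_int \<bar>zdot a (hsum h s n)\<bar> = \<bar>inner (vec_real a) (vec_real (hsum h s n - l))\<bar>"
      by (simp only: of_int_abs zdot_eq_inner)
    also have "\<dots> \<le> norm (vec_real a) * norm (vec_real (hsum h s n) - vec_real l)"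
      unfolding vec_real_diff by (rule Cauchy_Schwarz_ineq2)
    also have "\<dots> \<le> norm (vec_real a) * K" by (intro mult_left_mono l(2)) auto
    finally show ?thesis by linarith
  qed
  then show ?thesis by blast
qed

text \<open>Under the ftp, D spans R^d.  Otherwise a nonzero integer functional f vanishes on D
  and is bounded by M on orbit displacements; transitivity modulo N Z^d with N large then
  produces an orbit displacement congruent to a target t with f(t) > M modulo N, which is
  impossible.\<close>

lemma ftp_full_span:
  fixes C :: "'a::finite \<Rightarrow> 'a \<Rightarrow> bool" and h :: "'a \<Rightarrow> 'a \<Rightarrow> int^'n"
  assumes ftp: "ftp C h" and nonempty: "sft C \<noteq> {}"
  shows "span (vec_real ` Dset C h) = UNIV"
proof (rule ccontr)
  assume "span (vec_real ` Dset C h) \<noteq> UNIV"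
  then obtain a where a: "a \<noteq> 0" "\<forall>x\<in>Dset C h. zdot a x = 0"
    using int_annihilator by blast
  obtain M where M: "\<And>s n. s \<in> sft C \<Longrightarrow> \<bar>zdot a (hsum h s n)\<bar> \<le> M"
    using annihilator_bounded_on_orbits[OF a(2)] by blast
  have M0: "0 \<le> M" using M nonempty by (meson abs_ge_zero all_not_in_conv order_trans)
  obtain j where p: "a $ j \<noteq> 0" using a(1) by (auto simp: vec_eq_iff)
  define t where "t = (M + 1) *s axis j (1::int)"
  have ft: "zdot a t = (M + 1) * a $ j" unfolding t_def zdot_scale zdot_axis ..
  have big: "M + 1 \<le> \<bar>zdot a t\<bar>"
    using p M0 by (simp add: ft abs_mult)
  define N where "N = 2 * \<bar>zdot a t\<bar>"
  have N: "N > 0" unfolding N_def using big M0 by simp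
  define \<Gamma> where "\<Gamma> = {x :: int^'n. \<forall>j. N dvd x $ j}"
  have "induced_transitive C h \<Gamma>"
    using ftp multiples_subgroup[OF N] unfolding ftp_def \<Gamma>_def by blast
  moreover have "sft_open C (sft C)" unfolding sft_open_def by auto
  ultimately obtain n s where s: "s \<in> sft C" "0 + hsum h s n - t \<in> \<Gamma>"
    unfolding induced_transitive_def using nonempty by blast
  have "N dvd zdot a (hsum h s n - t)"
    using s(2) unfolding \<Gamma>_def zdot_def by (auto intro!: dvd_sum dvd_mult)
  then have dvd: "N dvd zdot a (hsum h s n) - zdot a t" by (simp add: zdot_diff)
  have bounded: "\<bar>zdot a (hsum h s n)\<bar> \<le> M" by (rule M[OF s(1)])
  have "zdot a (hsum h s n) - zdot a t \<noteq> 0" using bounded big by auto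
  moreover have "\<bar>zdot a (hsum h s n) - zdot a t\<bar> < N" using bounded big unfolding N_def by linarith
  ultimately show False using dvd_imp_le_int[OF _ dvd] by fastforce
qed

theorem mainTheorem7:
  fixes C :: "'a::finite \<Rightarrow> 'a \<Rightarrow> bool"
    and h :: "'a \<Rightarrow> 'a \<Rightarrow> int^'n"
  assumes "transitive_sft C"
    and "0 \<in> rot_set C h"
  shows "(aff_dim (rot_set C h) = int CARD('n) \<longleftrightarrow> zrank (gen_subgroup (Dset C h)) = CARD('n))
       \<and> (ftp C h \<longrightarrow> aff_dim (rot_set C h) = int CARD('n))"
proof -
  have nonempty: "sft C \<noteq> {}" using assms(2) unfolding rot_set_def by auto
  have "aff_dim (rot_set C h) = int (dim (rot_set C h))"
    using assms(2) by (intro aff_dim_zero) (simp add: hull_inc)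
  then have "aff_dim (rot_set C h) = int CARD('n) \<longleftrightarrow> span (rot_set C h) = UNIV"
    using dim_eq_full[of "rot_set C h"] by simp
  then have full_dim_iff: "aff_dim (rot_set C h) = int CARD('n) \<longleftrightarrow> span (vec_real ` Dset C h) = UNIV"
    by (simp add: span_rot_set)
  show ?thesis
    using full_dim_iff real_span_full_iff_zrank ftp_full_span[OF _ nonempty] by blast
qed

end
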